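(* Let f1 and f2 be two point agents in the plane, each moving with a constant nonzero velocity, such that their straight-line trajectories are not parallel and hence intersect in a single point $P$. Let $t_1$ and $t_2$ be the times at which f1 and f2 respectively pass through $P$, and suppose $t_1>t_2$ (f1 reaches the intersection after f2). Then: (i) as observed by f1, agent f2 is in regressive motion at all times $t<t_2$ and in progressive motion at all times $t>t_2$; (ii) as observed by f2, agent f1 is in progressive motion at all times $t<t_1$ and in regressive motion at all times $t>t_1$.
   Context: Each agent is a point (center of projection) with a heading equal to the direction of its velocity. For an observer agent A and an observed agent B, let $\phi_{BA}(t)\in[-\pi,\pi)$ be the azimuthal position of B as seen from A, measured relative to A's heading: $\phi=0$ is straight ahead of A, positive angles are to A's left (counterclockwise) and negative angles to A's right. Let $\dot\phi_{BA}$ be its time derivative. B is said to be in regressive motion with respect to A at time $t$ if $\dot\phi_{BA}(t)\cdot\phi_{BA}(t)\le 0$, and in progressive motion otherwise. *)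

theory Defs
  imports "HOL-Complex_Analysis.Complex_Analysis"
begin

text \<open>The plane is modelled as the complex numbers.  An agent moving with constant
velocity v, located at c at time 0, has position traj c v t = c + t v.\<close>

definition traj :: "complex \<Rightarrow> complex \<Rightarrow> real \<Rightarrow> complex" where
  "traj c v t = c + of_real t * v"

text \<open>Azimuth of a displacement d relative to a heading direction h, in [-pi, pi):
0 = straight ahead, positive = counterclockwise (to the left).  Isabelle's Arg takes
values in (-pi, pi], so the value pi is mapped to -pi.\<close>

definition azimuth :: "complex \<Rightarrow> complex \<Rightarrow> real" where
  "azimuth h d = (let a = Arg (d / h) in if a = pi then - pi else a)"

definition phi_obs :: "(real \<Rightarrow> complex) \<Rightarrow> complex \<Rightarrow> (real \<Rightarrow> complex) \<Rightarrow> real \<Rightarrow> real" where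
  "phi_obs pA vA pB t = azimuth vA (pB t - pA t)"

definition regressive :: "(real \<Rightarrow> real) \<Rightarrow> real \<Rightarrow> bool" where
  "regressive phi t \<longleftrightarrow> phi differentiable (at t) \<and> deriv phi t * phi t \<le> 0"

definition progressive :: "(real \<Rightarrow> real) \<Rightarrow> real \<Rightarrow> bool" where
  "progressive phi t \<longleftrightarrow> phi differentiable (at t) \<and> deriv phi t * phi t > 0"

end

theory Submission
  imports Defs
begin

text \<open>Relative to the observer, the displacement of the other agent is an affine function
  d(t) = (t - t2) v2 - (t - t1) v1.  With X = Im (v2 cnj v1) \<noteq> 0 (non-parallel velocities),
  the azimuth has the sign of Im (d cnj v1) = (t - t2) X, and its rate of change, Im (d'/d),
  has the sign of Im (d' cnj d) = (t1 - t2) X.  Hence the product of azimuth and rate has the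
  sign of (t - t2)(t1 - t2), which flips exactly when the observed agent crosses P.\<close>

lemma traj_diff_if_meet:
  assumes "traj c1 v1 t1 = traj c2 v2 t2"
  shows "traj c2 v2 t - traj c1 v1 t = of_real (t - t2) * v2 - of_real (t - t1) * v1"
proof -
  have "c2 = c1 + of_real t1 * v1 - of_real t2 * v2"
    using assms by (simp add: traj_def algebra_simps)
  then show ?thesis by (simp add: traj_def algebra_simps)
qed

lemma Im_mult_cnj_neq_0_if_not_parallel:
  fixes v1 v2 :: complex
  assumes "v1 \<noteq> 0" and "\<not> (\<exists>r::real. v2 = of_real r * v1)"
  shows "Im (v2 * cnj v1) \<noteq> 0"
proof
  assume "Im (v2 * cnj v1) = 0"
  then have "v2 * cnj v1 = of_real (Re (v2 * cnj v1))" by (simp add: complex_eq_iff)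
  then have "v2 * (v1 * cnj v1) = of_real (Re (v2 * cnj v1)) * v1"
    by (metis mult.commute mult.left_commute)
  then have "v2 * of_real ((cmod v1)\<^sup>2) = of_real (Re (v2 * cnj v1)) * v1"
    by (simp only: complex_norm_square)
  then have "v2 = of_real (Re (v2 * cnj v1) / (cmod v1)\<^sup>2) * v1"
    using assms(1) by (simp add: field_simps)
  then show False using assms(2) by blast
qed

lemma azimuth_eq_Arg:
  assumes "Im (d / h) \<noteq> 0"
  shows "azimuth h d = Arg (d / h)"
  using assms by (simp add: azimuth_def Arg_eq_pi)

lemma azimuth_eq_Im_Ln:
  assumes "Im (d / h) \<noteq> 0"
  shows "azimuth h d = Im (Ln (d / h))"
proof -
  have "d / h \<noteq> 0" using assms by auto
  then show ?thesis by (simp add: azimuth_eq_Arg[OF assms] Arg_eq_Im_Ln)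
qed

lemma sgn_azimuth:
  assumes "Im (d / h) \<noteq> 0"
  shows "sgn (azimuth h d) = sgn (Im (d / h))"
  using assms Arg_pos_iff[of "d / h"] Arg_neg_iff[of "d / h"]
  by (auto simp: azimuth_eq_Arg[OF assms] sgn_if)

lemma has_real_derivative_azimuth:
  assumes z: "(z has_vector_derivative z') (at t)" and Im: "Im (z t / h) \<noteq> 0"
  shows "((\<lambda>u. azimuth h (z u)) has_real_derivative Im (z' / z t)) (at t)"
proof -
  have "h \<noteq> 0" using Im by auto
  have "((\<lambda>u. Im (z u / h)) \<longlongrightarrow> Im (z t / h)) (at t)"
    using has_vector_derivative_continuous[OF z] \<open>h \<noteq> 0\<close>
    by (intro tendsto_intros) (simp add: continuous_at)
  then have "eventually (\<lambda>u. Im (z u / h) \<noteq> 0) (at t)"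
    using Im by (rule tendsto_imp_eventually_ne)
  then have "eventually (\<lambda>u. azimuth h (z u) = Im (Ln (z u / h))) (nhds t)"
    using Im by (auto simp: eventually_at_filter azimuth_eq_Im_Ln elim: eventually_mono)
  moreover have "z t / h \<notin> \<real>\<^sub>\<le>\<^sub>0"
    using Im by (auto simp: complex_nonpos_Reals_iff)
  then have "((Ln \<circ> (\<lambda>u. z u / h)) has_vector_derivative z' / h * inverse (z t / h)) (at t)"
    by (intro field_vector_diff_chain_at has_vector_derivative_divide z has_field_derivative_Ln)
  then have "((\<lambda>u. Im (Ln (z u / h))) has_real_derivative Im (z' / h * inverse (z t / h))) (at t)"
    using has_field_derivative_Im by (simp add: o_def)
  moreover have "z' / h * inverse (z t / h) = z' / z t"
    using Im \<open>h \<noteq> 0\<close> by (auto simp: field_simps)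
  ultimately show ?thesis
    by (auto intro: DERIV_cong_ev[OF refl _ refl, THEN iffD2])
qed

lemma sgn_deriv_mult_phi_obs:
  fixes c1 v1 c2 v2 :: complex and t1 t2 t :: real
  defines "\<phi> \<equiv> phi_obs (traj c1 v1) v1 (traj c2 v2)"
  assumes cross: "Im (v2 * cnj v1) \<noteq> 0"
    and meet: "traj c1 v1 t1 = traj c2 v2 t2" and "t \<noteq> t2"
  shows "\<phi> differentiable (at t)"
    and "sgn (deriv \<phi> t * \<phi> t) = sgn ((t - t2) * (t1 - t2))"
proof -
  define X where "X = Im (v2 * cnj v1)"
  define d where "d u = of_real (u - t2) * v2 - of_real (u - t1) * v1" for u :: real
  have "v1 \<noteq> 0" using cross by auto
  have \<phi>_eq: "\<phi> = (\<lambda>u. azimuth v1 (d u))"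
    using traj_diff_if_meet[OF meet] by (simp add: fun_eq_iff \<phi>_def phi_obs_def d_def)
  have Im_d: "Im (d u / v1) = (u - t2) * X / (cmod v1)\<^sup>2" for u
    by (simp add: d_def X_def Im_divide cmod_power2 algebra_simps)
  have Im_rate: "Im ((v2 - v1) / d t) = (t1 - t2) * X / (cmod (d t))\<^sup>2"
    by (simp add: d_def X_def Im_divide cmod_power2 algebra_simps)
  have Im_dt: "Im (d t / v1) \<noteq> 0"
    using \<open>t \<noteq> t2\<close> \<open>v1 \<noteq> 0\<close> cross by (simp add: Im_d X_def)
  have "(d has_vector_derivative v2 - v1) (at t)"
    unfolding d_def by (auto intro!: derivative_eq_intros simp: algebra_simps)
  then have D: "(\<phi> has_real_derivative (t1 - t2) * X / (cmod (d t))\<^sup>2) (at t)"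
    unfolding \<phi>_eq Im_rate[symmetric] using Im_dt by (rule has_real_derivative_azimuth)
  then show "\<phi> differentiable (at t)"
    using real_differentiable_def by blast
  have "d t \<noteq> 0" using Im_dt by auto
  have "sgn (\<phi> t) = sgn ((t - t2) * X)"
    using sgn_azimuth[OF Im_dt] \<open>v1 \<noteq> 0\<close>
    by (simp add: \<phi>_eq Im_d sgn_mult)
  moreover have "sgn (deriv \<phi> t) = sgn ((t1 - t2) * X)"
    using DERIV_imp_deriv[OF D] \<open>d t \<noteq> 0\<close> by (simp add: sgn_mult)
  moreover have "sgn X * sgn X = 1"
    using cross by (simp add: X_def sgn_if)
  ultimately show "sgn (deriv \<phi> t * \<phi> t) = sgn ((t - t2) * (t1 - t2))"
    by (simp add: sgn_mult ac_simps)
qed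

theorem theorem3:
  fixes c1 v1 c2 v2 :: complex and t1 t2 :: real
  assumes "v1 \<noteq> 0" and "v2 \<noteq> 0"
    and not_parallel: "\<not> (\<exists>r::real. v2 = of_real r * v1)"
    and meet: "traj c1 v1 t1 = traj c2 v2 t2"
    and "t1 > t2"
  shows "(\<forall>t. t < t2 \<longrightarrow> regressive (phi_obs (traj c1 v1) v1 (traj c2 v2)) t)
       \<and> (\<forall>t. t > t2 \<longrightarrow> progressive (phi_obs (traj c1 v1) v1 (traj c2 v2)) t)
       \<and> (\<forall>t. t < t1 \<longrightarrow> progressive (phi_obs (traj c2 v2) v2 (traj c1 v1)) t)
       \<and> (\<forall>t. t > t1 \<longrightarrow> regressive (phi_obs (traj c2 v2) v2 (traj c1 v1)) t)"
proof -
  have cross12: "Im (v2 * cnj v1) \<noteq> 0"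
    using Im_mult_cnj_neq_0_if_not_parallel[OF \<open>v1 \<noteq> 0\<close> not_parallel] .
  then have cross21: "Im (v1 * cnj v2) \<noteq> 0" by (simp add: mult.commute)
  note obs1 = sgn_deriv_mult_phi_obs[OF cross12 meet]
  note obs2 = sgn_deriv_mult_phi_obs[OF cross21 meet[symmetric]]
  have neg: "x < 0" if "sgn x = sgn y" "y < 0" for x y :: real
    using that by (metis sgn_less)
  have pos: "x > 0" if "sgn x = sgn y" "y > 0" for x y :: real
    using that by (metis sgn_greater)
  have "regressive (phi_obs (traj c1 v1) v1 (traj c2 v2)) t" if "t < t2" for t
    using obs1 neg that \<open>t1 > t2\<close> mult_neg_pos[of "t - t2" "t1 - t2"]
    unfolding regressive_def by (smt (verit))
  moreover have "progressive (phi_obs (traj c1 v1) v1 (traj c2 v2)) t" if "t > t2" for t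
    using obs1 pos that \<open>t1 > t2\<close> mult_pos_pos[of "t - t2" "t1 - t2"]
    unfolding progressive_def by (smt (verit))
  moreover have "progressive (phi_obs (traj c2 v2) v2 (traj c1 v1)) t" if "t < t1" for t
    using obs2 pos that \<open>t1 > t2\<close> mult_neg_neg[of "t - t1" "t2 - t1"]
    unfolding progressive_def by (smt (verit))
  moreover have "regressive (phi_obs (traj c2 v2) v2 (traj c1 v1)) t" if "t > t1" for t
    using obs2 neg that \<open>t1 > t2\<close> mult_pos_neg[of "t - t1" "t2 - t1"]
    unfolding regressive_def by (smt (verit))
  ultimately show ?thesis by blast
qed

end
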